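(* Let $-D/2\le x_C<x_B\le D/2$, let $(\bar r_1^{BC},\bar r_2^{BC})$ be the unique intersection point of the boundary curves of $\mathcal{C}_f(x_B)$ and $\mathcal{C}_f(x_C)$, and let $(\bar r_1^B,\bar r_2^B)\in\partial\mathcal{C}_f(x_B)$ and $(\bar r_1^C,\bar r_2^C)\in\partial\mathcal{C}_f(x_C)$ be the points at which the upper-right common tangent line $\ell$ of the convex hull of $\mathcal{C}_f(x_B)\cup\mathcal{C}_f(x_C)$ touches the boundaries of $\mathcal{C}_f(x_B)$ and $\mathcal{C}_f(x_C)$, respectively. Then $0\le\bar r_1^B<\bar r_1^{BC}<\bar r_1^C$ and $0\le\bar r_2^C<\bar r_2^{BC}<\bar r_2^B$.
   Context: Fix $D>0$, $H>0$, $\beta_0>0$, $\bar P>0$. Ground users GU 1, GU 2 are at horizontal positions $x_1=-D/2$, $x_2=D/2$; for a UAV at horizontal position $x$ (altitude $H$), $h_k(x)=\beta_0/((x-x_k)^2+H^2)$. For $p_1,p_2\ge0$, $\mathcal{C}_{\rm MAC}(x,p_1,p_2)$ is the set of $(r_1,r_2)$, $r_1,r_2\ge0$, with $r_1\le\log_2(1+p_1h_1(x))$, $r_2\le\log_2(1+p_2h_2(x))$, $r_1+r_2\le\log_2(1+p_1h_1(x)+p_2h_2(x))$; the fixed-location capacity region is $\mathcal{C}_f(x)=\bigcup_{p_1,p_2\ge0,\,p_1+p_2\le\bar P}\mathcal{C}_{\rm MAC}(x,p_1,p_2)$. For $m\in\{B,C\}$, the boundary curve of $\mathcal{C}_f(x_m)$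 is $r_2^m(r_1)=\max\{r_2:(r_1,r_2)\in\mathcal{C}_f(x_m)\}$ for $0\le r_1\le\log_2(1+\bar Ph_1(x_m))$; the two curves $r_2^B$ and $r_2^C$ intersect at exactly one point, denoted $(\bar r_1^{BC},\bar r_2^{BC})$. *)

theory Defs
  imports Complex_Main
begin

text \<open>Channel gain from the UAV at horizontal position x to a GU at horizontal position xk.\<close>
definition chan :: "real \<Rightarrow> real \<Rightarrow> real \<Rightarrow> real \<Rightarrow> real" where
  "chan \<beta>0 H xk x = \<beta>0 / ((x - xk)^2 + H^2)"

definition h1 :: "real \<Rightarrow> real \<Rightarrow> real \<Rightarrow> real \<Rightarrow> real" where
  "h1 D H \<beta>0 x = chan \<beta>0 H (- D / 2) x"

definition h2 :: "real \<Rightarrow> real \<Rightarrow> real \<Rightarrow> real \<Rightarrow> real" where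
  "h2 D H \<beta>0 x = chan \<beta>0 H (D / 2) x"

definition C_MAC :: "real \<Rightarrow> real \<Rightarrow> real \<Rightarrow> real \<Rightarrow> real \<Rightarrow> real \<Rightarrow> (real \<times> real) set" where
  "C_MAC D H \<beta>0 x p1 p2 = {(r1, r2). r1 \<ge> 0 \<and> r2 \<ge> 0 \<and>
      r1 \<le> log 2 (1 + p1 * h1 D H \<beta>0 x) \<and>
      r2 \<le> log 2 (1 + p2 * h2 D H \<beta>0 x) \<and>
      r1 + r2 \<le> log 2 (1 + p1 * h1 D H \<beta>0 x + p2 * h2 D H \<beta>0 x)}"

definition C_f :: "real \<Rightarrow> real \<Rightarrow> real \<Rightarrow> real \<Rightarrow> real \<Rightarrow> (real \<times> real) set" where
  "C_f D H \<beta>0 P x = (\<Union>p1 \<in> {0..}. \<Union>p2 \<in> {0..}. if p1 + p2 \<le> P then C_MAC D H \<beta>0 x p1 p2 else {})"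

definition bcurve :: "real \<Rightarrow> real \<Rightarrow> real \<Rightarrow> real \<Rightarrow> real \<Rightarrow> real \<Rightarrow> real" where
  "bcurve D H \<beta>0 P x r1 = (GREATEST r2. (r1, r2) \<in> C_f D H \<beta>0 P x)"

definition bdom :: "real \<Rightarrow> real \<Rightarrow> real \<Rightarrow> real \<Rightarrow> real \<Rightarrow> real set" where
  "bdom D H \<beta>0 P x = {0 .. log 2 (1 + P * h1 D H \<beta>0 x)}"

end

(*
  In the coordinates s = 2 powr r1, v = 2 powr r2 the boundary of the capacity region is an explicit
  strictly decreasing curve, obtained by spending the whole power budget and decoding the weaker user
  last.  Moving the UAV from xC to xB lowers h1 and raises h2, so the boundary for xB starts higher
  and ends earlier; as the two boundaries meet only once, the one for xB lies above the one for xC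
  left of the crossing and below it to the right.  A supporting line with nonnegative normal can
  therefore touch the xB boundary only left of the crossing and the xC boundary only right of it.
  It cannot touch both at the crossing itself: the slope of a boundary at a common point is a
  strictly monotone function of the gain ratio h2/h1, so the two boundaries cross transversally.
*)
theory Submission
  imports Defs
begin

locale crossing_curves =
  fixes f g :: "real \<Rightarrow> real" and a b x f' g' :: real
  assumes ends_less: "a < b"
    and f_decreasing: "\<And>r r'. 0 \<le> r \<Longrightarrow> r < r' \<Longrightarrow> r' \<le> a \<Longrightarrow> f r' < f r"
    and g_decreasing: "\<And>r r'. 0 \<le> r \<Longrightarrow> r < r' \<Longrightarrow> r' \<le> b \<Longrightarrow> g r' < g r"
    and f_end: "f a = 0" and g_end: "g b = 0" and g_less_f_start: "g 0 < f 0"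
    and f_continuous: "continuous_on {0..a} f" and g_continuous: "continuous_on {0..b} g"
    and crossing: "0 \<le> x" "x \<le> a" "f x = g x"
    and crossing_unique: "\<And>r. 0 \<le> r \<Longrightarrow> r \<le> a \<Longrightarrow> f r = g r \<Longrightarrow> r = x"
    and f_deriv: "(f has_real_derivative f') (at x)"
    and g_deriv: "(g has_real_derivative g') (at x)"
    and transversal: "f' \<noteq> g'"
begin

lemma g_nonneg: "0 \<le> r \<Longrightarrow> r \<le> b \<Longrightarrow> 0 \<le> g r"
  using g_decreasing[of r b] g_end by (cases "r = b") auto

lemma f_less_g_end: "f a < g a"
  using g_nonneg[of a] g_decreasing[of a b] crossing ends_less f_end g_end by auto

lemma crossing_interior: "0 < x" "x < a"
  using crossing g_less_f_start f_less_g_end by (auto simp: order.order_iff_strict)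

lemma diff_continuous_on: "continuous_on {0..a} (\<lambda>r. f r - g r)"
  using ends_less by (intro continuous_intros f_continuous continuous_on_subset[OF g_continuous]) auto

lemma g_less_f: assumes "0 \<le> r" "r < x" shows "g r < f r"
proof (rule ccontr)
  assume "\<not> g r < f r"
  then obtain y where "0 \<le> y" "y \<le> r" "f y - g y = 0"
    using IVT2'[of "\<lambda>r. f r - g r" r 0 0] g_less_f_start assms crossing
      continuous_on_subset[OF diff_continuous_on, of "{0..r}"] by auto
  then show False using crossing_unique[of y] assms crossing by auto
qed

lemma f_less_g: assumes "x < r" "r \<le> a" shows "f r < g r"
proof (rule ccontr)
  assume "\<not> f r < g r"
  then obtain y where "r \<le> y" "y \<le> a" "f y - g y = 0"
    using IVT2'[of "\<lambda>r. f r - g r" a 0 r] f_less_g_end assms crossing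
      continuous_on_subset[OF diff_continuous_on, of "{r..a}"] by auto
  then show False using crossing_unique[of y] assms crossing by auto
qed

end

locale common_support_line = crossing_curves +
  fixes w1 w2 c rf rg :: real
  assumes weights_nonneg: "0 \<le> w1" "0 \<le> w2" and weights_nonzero: "(w1, w2) \<noteq> (0, 0)"
    and supports_f: "\<And>r. 0 \<le> r \<Longrightarrow> r \<le> a \<Longrightarrow> w1 * r + w2 * f r \<le> c"
    and supports_g: "\<And>r. 0 \<le> r \<Longrightarrow> r \<le> b \<Longrightarrow> w1 * r + w2 * g r \<le> c"
    and touches_f: "0 \<le> rf" "rf \<le> a" "w1 * rf + w2 * f rf = c"
    and touches_g: "0 \<le> rg" "rg \<le> b" "w1 * rg + w2 * g rg = c"
begin

lemma weight2_pos: "0 < w2"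
proof (rule ccontr)
  assume "\<not> 0 < w2"
  then have "w2 = 0" "0 < w1" using weights_nonneg weights_nonzero by auto
  then show False
    using supports_g[of b] touches_f ends_less crossing by (auto simp: mult_less_cancel_left)
qed

lemma touching_slope:
  assumes "(h has_real_derivative h') (at x)" "0 < e"
    and "\<And>y. \<bar>x - y\<bar> < e \<Longrightarrow> w1 * y + w2 * h y \<le> c" "w1 * x + w2 * h x = c"
  shows "w1 + w2 * h' = 0"
proof -
  have "((\<lambda>r. c - w1 * r - w2 * h r) has_real_derivative 0 - w1 * 1 - w2 * h') (at x)"
    by (auto intro!: derivative_eq_intros assms(1))
  then have "0 - w1 * 1 - w2 * h' = 0"
    by (rule DERIV_local_min[OF _ assms(2)]) (use assms(3,4) in \<open>auto simp: algebra_simps\<close>)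
  then show ?thesis by simp
qed

lemma not_through_crossing: "w1 * x + w2 * f x \<noteq> c"
proof
  assume through: "w1 * x + w2 * f x = c"
  define e where "e = min x (a - x)"
  have e: "0 < e" "\<And>y. \<bar>x - y\<bar> < e \<Longrightarrow> 0 \<le> y \<and> y \<le> a"
    using crossing_interior by (auto simp: e_def abs_less_iff)
  have "w1 + w2 * f' = 0"
    using touching_slope[OF f_deriv e(1)] e(2) supports_f through by blast
  moreover have "w1 + w2 * g' = 0"
    using touching_slope[OF g_deriv e(1)] e(2) supports_g through crossing ends_less
    by fastforce
  ultimately have "w2 * f' = w2 * g'" by linarith
  then show False using weight2_pos transversal by simp
qed

theorem touch_points_ordered:
  "0 \<le> rf \<and> rf < x \<and> x < rg \<and> 0 \<le> g rg \<and> g rg < g x \<and> g x < f rf"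
proof -
  have "rf < x"
  proof (rule ccontr)
    assume "\<not> rf < x"
    moreover have "rf \<noteq> x" using not_through_crossing touches_f by auto
    ultimately have "f rf < g rf" using f_less_g touches_f by simp
    then have "w1 * rf + w2 * f rf < w1 * rf + w2 * g rf" using weight2_pos by simp
    then show False using supports_g[of rf] touches_f ends_less by simp
  qed
  moreover have "x < rg"
  proof (rule ccontr)
    assume "\<not> x < rg"
    moreover have "rg \<noteq> x" using not_through_crossing touches_g crossing by auto
    ultimately have "g rg < f rg" using g_less_f touches_g by simp
    then have "w1 * rg + w2 * g rg < w1 * rg + w2 * f rg" using weight2_pos by simp
    then show False using supports_f[of rg] touches_g crossing \<open>\<not> x < rg\<close> by simp
  qed
  ultimately show ?thesis
    using touches_f touches_g crossing g_nonneg f_decreasing[of rf x] g_decreasing[of x rg] by auto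
qed

end

(* The region C_f in the coordinates s = 2 powr r1, v = 2 powr r2, for gains a = h1 and b = h2. *)
definition exp_region :: "real \<Rightarrow> real \<Rightarrow> real \<Rightarrow> real \<Rightarrow> real \<Rightarrow> bool" where
  "exp_region a b P s v \<longleftrightarrow> (\<exists>p1 p2. 0 \<le> p1 \<and> 0 \<le> p2 \<and> p1 + p2 \<le> P \<and>
     s \<le> 1 + p1 * a \<and> v \<le> 1 + p2 * b \<and> s * v \<le> 1 + p1 * a + p2 * b)"

lemma chan_nonneg: "0 \<le> \<beta>0 \<Longrightarrow> 0 \<le> chan \<beta>0 H xk x"
  by (simp add: chan_def)

lemma mem_C_f_iff_exp_region:
  assumes "0 \<le> \<beta>0"
  shows "(r1, r2) \<in> C_f D H \<beta>0 P x \<longleftrightarrow>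
    0 \<le> r1 \<and> 0 \<le> r2 \<and> exp_region (h1 D H \<beta>0 x) (h2 D H \<beta>0 x) P (2 powr r1) (2 powr r2)"
proof -
  have gains: "0 \<le> h1 D H \<beta>0 x" "0 \<le> h2 D H \<beta>0 x"
    using chan_nonneg[OF assms] by (simp_all add: h1_def h2_def)
  have le_log: "r \<le> log 2 y \<longleftrightarrow> 2 powr r \<le> y" if "1 \<le> y" for r y
    using le_log_iff[of 2 y r] that by simp
  show ?thesis
    unfolding C_f_def C_MAC_def exp_region_def
    using gains by (auto simp: le_log powr_add mult.commute)
qed

(* The largest v for given s: the whole budget is spent and the weaker user is decoded last, so its
   single-user constraint and the sum constraint are tight; eliminating p1 and p2 gives these formulas. *)
definition exp_boundary :: "real \<Rightarrow> real \<Rightarrow> real \<Rightarrow> real \<Rightarrow> real" where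
  "exp_boundary a b P s =
    (if b \<le> a then a * (1 + P * b) / (a + (s - 1) * b) else (b * (1 + P * a) - (b - a) * s) / (a * s))"

lemma exp_boundary_ge_one:
  assumes "0 < a" "0 < b" "0 < P" "1 \<le> s" "s \<le> 1 + P * a"
  shows "1 \<le> exp_boundary a b P s"
proof (cases "b \<le> a")
  case True
  have "(s - 1) * b \<le> (P * a) * b" using assms by (intro mult_right_mono) auto
  then have "a + (s - 1) * b \<le> a * (1 + P * b)" by (simp add: algebra_simps)
  moreover have "0 < a + (s - 1) * b" using assms by (simp add: add_pos_nonneg)
  ultimately show ?thesis using True by (simp add: exp_boundary_def)
next
  case False
  have "b * s \<le> b * (1 + P * a)" using assms by (intro mult_left_mono) auto
  then have "a * s \<le> b * (1 + P * a) - (b - a) * s" by (simp add: algebra_simps)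
  then show ?thesis using False assms by (simp add: exp_boundary_def)
qed

lemma exp_boundary_strict_decreasing:
  assumes "0 < a" "0 < b" "0 < P" "1 \<le> s" "s < s'"
  shows "exp_boundary a b P s' < exp_boundary a b P s"
proof (cases "b \<le> a")
  case True
  have "0 < a + (s - 1) * b" using assms by (simp add: add_pos_nonneg)
  moreover have "a + (s - 1) * b < a + (s' - 1) * b" using assms by simp
  moreover have "0 < a * (1 + P * b)" using assms by (simp add: add_pos_pos)
  ultimately show ?thesis using True by (simp add: exp_boundary_def divide_strict_left_mono)
next
  case False
  have split: "(b * (1 + P * a) - (b - a) * t) / (a * t) = b * (1 + P * a) / (a * t) - (b - a) / a"
    if "0 < t" for t
    using assms that by (simp add: field_simps)
  have "b * (1 + P * a) / (a * s') < b * (1 + P * a) / (a * s)"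
    using assms by (intro divide_strict_left_mono) (auto simp: add_pos_pos)
  then show ?thesis using False assms split[of s] split[of s'] by (simp add: exp_boundary_def)
qed

lemma exp_region_le_exp_boundary:
  assumes "0 < a" "0 < b" "exp_region a b P s v" "1 \<le> s" "0 < v"
  shows "v \<le> exp_boundary a b P s"
proof -
  obtain p1 p2 where p: "0 \<le> p1" "0 \<le> p2" "p1 + p2 \<le> P" "s \<le> 1 + p1 * a" "v \<le> 1 + p2 * b"
    "s * v \<le> 1 + p1 * a + p2 * b"
    using assms(3) unfolding exp_region_def by blast
  have budget: "a * b * (p1 + p2) \<le> a * b * P" using assms p by (intro mult_left_mono) auto
  have sum_rate: "c * (s * v) \<le> c * (1 + p1 * a + p2 * b)" if "0 \<le> c" for c
    using p(6) that by (rule mult_left_mono)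
  show ?thesis
  proof (cases "b \<le> a")
    case True
    have "(a - b) * v \<le> (a - b) * (1 + p2 * b)" using p True by (intro mult_left_mono) auto
    then have "v * (a + (s - 1) * b) \<le> a * (1 + P * b)"
      using sum_rate[of b] budget assms by (simp add: algebra_simps)
    moreover have "0 < a + (s - 1) * b" using assms by (simp add: add_pos_nonneg)
    ultimately show ?thesis using True by (simp add: exp_boundary_def pos_le_divide_eq)
  next
    case False
    have "(b - a) * s \<le> (b - a) * (1 + p1 * a)" using p False by (intro mult_left_mono) auto
    then have "v * (a * s) \<le> b * (1 + P * a) - (b - a) * s"
      using sum_rate[of a] budget assms by (simp add: algebra_simps)
    then show ?thesis using False assms by (simp add: exp_boundary_def pos_le_divide_eq)
  qed
qed

lemma exp_region_exp_boundary_if_le: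
  assumes "0 < a" "0 < b" "0 < P" "1 \<le> s" "s \<le> 1 + P * a" "b \<le> a"
  shows "exp_region a b P s (exp_boundary a b P s)"
proof -
  define V where "V = exp_boundary a b P s"
  have d: "0 < a + (s - 1) * b" using assms by (simp add: add_pos_nonneg)
  define p2 where "p2 = (P * a - s + 1) / (a + (s - 1) * b)"
  define p1 where "p1 = P - p2"
  have p2: "0 \<le> p2" using assms d by (simp add: p2_def)
  have "p1 = (s - 1) * (P * b + 1) / (a + (s - 1) * b)"
    using d by (simp add: p1_def p2_def field_simps)
  then have p1: "0 \<le> p1" using assms d by simp
  have V_eq: "V = 1 + p2 * b" using d assms by (simp add: V_def exp_boundary_def p2_def field_simps)
  have p2_eq: "p2 * (a + (s - 1) * b) = P * a - s + 1" using d by (simp add: p2_def)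
  have V_den: "V * (a + (s - 1) * b) = a * (1 + P * b)"
    using d assms by (simp add: V_def exp_boundary_def)
  have "(s * V) * (a + (s - 1) * b) = s * (a * (1 + P * b))"
    by (simp only: mult.assoc V_den)
  also have "\<dots> = (a + (s - 1) * b) * (1 + P * a) + (b - a) * (P * a - s + 1)"
    by (simp add: algebra_simps)
  also have "\<dots> = (1 + p1 * a + p2 * b) * (a + (s - 1) * b)"
    unfolding p2_eq[symmetric] p1_def by (simp add: algebra_simps)
  finally have sV: "s * V = 1 + p1 * a + p2 * b" using d by simp
  have "1 * (p2 * b) \<le> s * (p2 * b)" using assms p2 by (intro mult_right_mono) auto
  then have "s \<le> 1 + p1 * a" using sV V_eq by (simp add: algebra_simps)
  then show ?thesis
    unfolding exp_region_def V_def[symmetric] using p1 p2 V_eq sV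
    by (intro exI[of _ p1] exI[of _ p2]) (auto simp: p1_def)
qed

lemma exp_region_exp_boundary_if_gt:
  assumes "0 < a" "0 < b" "0 < P" "1 \<le> s" "s \<le> 1 + P * a" "a < b"
  shows "exp_region a b P s (exp_boundary a b P s)"
proof -
  define V where "V = exp_boundary a b P s"
  define p1 where "p1 = (s - 1) / a"
  define p2 where "p2 = P - p1"
  have p1: "0 \<le> p1" using assms by (simp add: p1_def)
  have p2: "0 \<le> p2" using assms by (simp add: p2_def p1_def field_simps)
  have s_eq: "s = 1 + p1 * a" using assms by (simp add: p1_def)
  have sV: "s * V = 1 + p1 * a + p2 * b"
    using assms by (simp add: V_def exp_boundary_def p2_def p1_def field_simps; simp add: algebra_simps)
  have "1 * (p1 * a) \<le> V * (p1 * a)"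
    using p1 assms exp_boundary_ge_one[OF assms(1-5)] by (intro mult_right_mono) (auto simp: V_def)
  then have "V \<le> 1 + p2 * b" using sV s_eq by (simp add: algebra_simps)
  then show ?thesis
    unfolding exp_region_def V_def[symmetric] using p1 p2 s_eq sV
    by (intro exI[of _ p1] exI[of _ p2]) (auto simp: p2_def)
qed

lemma exp_region_exp_boundary:
  assumes "0 < a" "0 < b" "0 < P" "1 \<le> s" "s \<le> 1 + P * a"
  shows "exp_region a b P s (exp_boundary a b P s)"
  using exp_region_exp_boundary_if_le[OF assms] exp_region_exp_boundary_if_gt[OF assms]
  by (cases "b \<le> a") auto

(* Minus the slope d r2 / d r1 of the boundary at s = 2 powr r1, v = 2 powr r2, as a function of
   the gain ratio t = b / a. *)
definition boundary_steepness :: "real \<Rightarrow> real \<Rightarrow> real \<Rightarrow> real" where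
  "boundary_steepness s v t = (if t \<le> 1 then t * s / (1 - t + t * s) else 1 + (t - 1) / v)"

lemma boundary_steepness_strict_mono:
  assumes "1 \<le> s" "0 < v" "0 < t" "t < t'"
  shows "boundary_steepness s v t < boundary_steepness s v t'"
proof -
  have den: "0 < 1 - u + u * s" if "0 < u" for u
  proof -
    have "0 \<le> u * (s - 1)" using assms that by simp
    then show ?thesis by (simp add: algebra_simps)
  qed
  have le_one: "u * s / (1 - u + u * s) \<le> 1" if "0 < u" "u \<le> 1" for u
    using den[OF that(1)] that by (simp add: divide_le_eq_1)
  consider "t' \<le> 1" | "t \<le> 1" "1 < t'" | "1 < t" by linarith
  then show ?thesis
  proof cases
    case 1
    have "t * s * (1 - t' + t' * s) < t' * s * (1 - t + t * s)"
      using assms by (simp add: algebra_simps)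
    then show ?thesis
      using 1 assms den[of t] den[of t'] by (simp add: boundary_steepness_def divide_simps)
  next
    case 2
    have "boundary_steepness s v t \<le> 1" using 2 le_one[of t] assms by (simp add: boundary_steepness_def)
    moreover have "1 < boundary_steepness s v t'" using 2 assms by (simp add: boundary_steepness_def)
    ultimately show ?thesis by linarith
  next
    case 3
    then show ?thesis using assms by (simp add: boundary_steepness_def divide_strict_right_mono)
  qed
qed

lemma exp_boundary_has_derivative:
  assumes "0 < a" "0 < b" "0 < P" "1 \<le> s" "s \<le> 1 + P * a"
  shows "(exp_boundary a b P has_real_derivative
    - boundary_steepness s (exp_boundary a b P s) (b / a) * exp_boundary a b P s / s) (at s)"
proof (cases "b \<le> a")
  case True
  have d: "0 < a + (s - 1) * b" using assms by (simp add: add_pos_nonneg)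
  have steepness: "boundary_steepness s (exp_boundary a b P s) (b / a) = b * s / (a + (s - 1) * b)"
  proof -
    have "1 - b / a + b / a * s = (a + (s - 1) * b) / a" using assms by (simp add: field_simps)
    then show ?thesis using True assms by (simp add: boundary_steepness_def)
  qed
  have "((\<lambda>s. a * (1 + P * b) / (a + (s - 1) * b)) has_real_derivative
      - (a * b * (1 + P * b)) / (a + (s - 1) * b)\<^sup>2) (at s)"
    using d by (auto intro!: derivative_eq_intros simp: power2_eq_square field_simps)
  moreover have "- (a * b * (1 + P * b)) / D\<^sup>2 = - (b * s / D) * (a * (1 + P * b) / D) / s"
    if "D \<noteq> 0" for D
    using that assms by (simp add: power2_eq_square field_simps)
  ultimately have "((\<lambda>s. a * (1 + P * b) / (a + (s - 1) * b)) has_real_derivative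
      - boundary_steepness s (exp_boundary a b P s) (b / a) * exp_boundary a b P s / s) (at s)"
    unfolding steepness using True d by (simp add: exp_boundary_def)
  then show ?thesis using True by (simp add: exp_boundary_def[abs_def])
next
  case False
  define V where "V = exp_boundary a b P s"
  have V_pos: "0 < V" using exp_boundary_ge_one[OF assms] by (simp add: V_def)
  have V_eq: "V * (a * s) = b * (1 + P * a) - (b - a) * s"
    using False assms by (simp add: V_def exp_boundary_def)
  have "\<not> b / a \<le> 1" using False assms by simp
  then have "boundary_steepness s V (b / a) * V / s = (V + b / a - 1) / s"
    using V_pos assms by (simp add: boundary_steepness_def field_simps)
  also have "\<dots> = b * (1 + P * a) / (a * s\<^sup>2)"
    using assms V_eq by (simp add: power2_eq_square field_simps)
  finally have steepness: "boundary_steepness s V (b / a) * V / s = b * (1 + P * a) / (a * s\<^sup>2)" .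
  have "((\<lambda>s. (b * (1 + P * a) - (b - a) * s) / (a * s)) has_real_derivative
      - (b * (1 + P * a) / (a * s\<^sup>2))) (at s)"
    using False assms by (auto intro!: derivative_eq_intros simp: power2_eq_square field_simps)
  then have "(exp_boundary a b P has_real_derivative - (b * (1 + P * a) / (a * s\<^sup>2))) (at s)"
    using False by (simp add: exp_boundary_def[abs_def])
  then show ?thesis using steepness by (simp add: V_def)
qed

definition rate_boundary :: "real \<Rightarrow> real \<Rightarrow> real \<Rightarrow> real \<Rightarrow> real" where
  "rate_boundary a b P r = log 2 (exp_boundary a b P (2 powr r))"

lemma powr_bounds_if_le_log:
  assumes "0 \<le> r" "r \<le> log 2 y" "1 \<le> y"
  shows "1 \<le> 2 powr r" "2 powr r \<le> y"
  using assms le_log_iff[of 2 y r] by (auto simp: ge_one_powr_ge_zero)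

lemma rate_boundary_nonneg:
  assumes "0 < a" "0 < b" "0 < P" "0 \<le> r" "r \<le> log 2 (1 + P * a)"
  shows "0 \<le> rate_boundary a b P r"
  using exp_boundary_ge_one[OF assms(1-3) powr_bounds_if_le_log[OF assms(4,5)]] assms
  by (simp add: rate_boundary_def)

lemma rate_boundary_zero:
  assumes "0 < a" "0 < b"
  shows "rate_boundary a b P 0 = log 2 (1 + P * b)"
proof -
  have "b * (1 + P * a) - (b - a) = a * (1 + P * b)" by (simp add: algebra_simps)
  then show ?thesis using assms by (simp add: rate_boundary_def exp_boundary_def)
qed

lemma rate_boundary_end:
  assumes "0 < a" "0 < b" "0 < P"
  shows "rate_boundary a b P (log 2 (1 + P * a)) = 0"
proof -
  have "a + P * a * b = a * (1 + P * b)" "b * (1 + P * a) - (b - a) * (1 + P * a) = a * (1 + P * a)"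
    by (simp_all add: algebra_simps)
  moreover have "0 < 1 + P * a" "0 < 1 + P * b" using assms by (simp_all add: add_pos_pos)
  ultimately show ?thesis using assms by (simp add: rate_boundary_def exp_boundary_def)
qed

lemma rate_boundary_strict_decreasing:
  assumes "0 < a" "0 < b" "0 < P" "0 \<le> r" "r < r'" "r' \<le> log 2 (1 + P * a)"
  shows "rate_boundary a b P r' < rate_boundary a b P r"
proof -
  have "1 \<le> 2 powr r" using assms by (simp add: ge_one_powr_ge_zero)
  moreover have "1 \<le> 1 + P * a" using assms by simp
  ultimately have "exp_boundary a b P (2 powr r') < exp_boundary a b P (2 powr r)"
    using assms by (intro exp_boundary_strict_decreasing) auto
  moreover have "1 \<le> exp_boundary a b P (2 powr r')"
    using assms by (intro exp_boundary_ge_one powr_bounds_if_le_log) auto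
  ultimately show ?thesis by (simp add: rate_boundary_def)
qed

lemma rate_boundary_has_derivative:
  assumes "0 < a" "0 < b" "0 < P" "0 \<le> r" "r \<le> log 2 (1 + P * a)"
  shows "(rate_boundary a b P has_real_derivative
    - boundary_steepness (2 powr r) (exp_boundary a b P (2 powr r)) (b / a)) (at r)"
proof -
  define s where "s = 2 powr r"
  define V where "V = exp_boundary a b P s"
  have s: "1 \<le> s" "s \<le> 1 + P * a"
    using powr_bounds_if_le_log[OF assms(4,5)] assms by (simp_all add: s_def)
  have V: "0 < V" using exp_boundary_ge_one[OF assms(1-3) s] by (simp add: V_def)
  have "((\<lambda>r. 2 powr r) has_real_derivative s * ln 2) (at r)"
    unfolding s_def by (auto intro!: derivative_eq_intros)
  from DERIV_chain2[OF exp_boundary_has_derivative[OF assms(1-3) s, unfolded s_def] this[unfolded s_def]]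
  have "((\<lambda>r. exp_boundary a b P (2 powr r)) has_real_derivative
      - boundary_steepness s V (b / a) * V / s * (s * ln 2)) (at r)"
    by (simp add: V_def s_def)
  from DERIV_chain2[OF DERIV_log[where b = 2, OF V[unfolded V_def s_def]] this[unfolded V_def s_def]]
  show ?thesis
    using V s by (simp add: rate_boundary_def[abs_def] s_def[symmetric] V_def[symmetric])
qed

lemma rate_boundary_continuous_on:
  assumes "0 < a" "0 < b" "0 < P"
  shows "continuous_on {0..log 2 (1 + P * a)} (rate_boundary a b P)"
  using rate_boundary_has_derivative[OF assms]
  by (intro continuous_at_imp_continuous_on ballI DERIV_isCont) auto

lemma rate_boundaries_crossing_curves:
  assumes gains: "0 < aB" "aB < aC" "0 < bC" "bC < bB" and P: "0 < P"
    and crossing: "0 \<le> x" "x \<le> log 2 (1 + P * aB)" "rate_boundary aB bB P x = rate_boundary aC bC P x"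
    and crossing_unique: "\<And>r. 0 \<le> r \<Longrightarrow> r \<le> log 2 (1 + P * aB) \<Longrightarrow>
      rate_boundary aB bB P r = rate_boundary aC bC P r \<Longrightarrow> r = x"
  shows "crossing_curves (rate_boundary aB bB P) (rate_boundary aC bC P)
    (log 2 (1 + P * aB)) (log 2 (1 + P * aC)) x
    (- boundary_steepness (2 powr x) (exp_boundary aB bB P (2 powr x)) (bB / aB))
    (- boundary_steepness (2 powr x) (exp_boundary aC bC P (2 powr x)) (bC / aC))"
proof -
  have pos: "0 < aC" "0 < bB" using gains P crossing by simp_all
  have ends: "log 2 (1 + P * aB) < log 2 (1 + P * aC)" "0 < 1 + P * aB"
    using gains P crossing by (simp_all add: add_pos_pos)
  have x_C: "x \<le> log 2 (1 + P * aC)" using gains P crossing ends by simp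
  have s: "1 \<le> 2 powr x" using gains P crossing by (simp add: ge_one_powr_ge_zero)
  have V_ge_one: "1 \<le> exp_boundary aB bB P (2 powr x)" "1 \<le> exp_boundary aC bC P (2 powr x)"
    using gains P crossing pos x_C by (auto intro!: exp_boundary_ge_one powr_bounds_if_le_log)
  then have V_eq: "exp_boundary aB bB P (2 powr x) = exp_boundary aC bC P (2 powr x)"
    using crossing(3) inj_onD[OF log_inj[of 2]] by (simp add: rate_boundary_def)
  have "bC / aC < bB / aB"
    using gains P crossing by (intro frac_less2) auto
  then have "boundary_steepness (2 powr x) (exp_boundary aC bC P (2 powr x)) (bC / aC)
      < boundary_steepness (2 powr x) (exp_boundary aB bB P (2 powr x)) (bB / aB)"
    using boundary_steepness_strict_mono[OF s] V_ge_one V_eq gains P crossing pos by simp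
  then have transversal: "- boundary_steepness (2 powr x) (exp_boundary aB bB P (2 powr x)) (bB / aB)
      \<noteq> - boundary_steepness (2 powr x) (exp_boundary aC bC P (2 powr x)) (bC / aC)"
    by simp
  have start: "rate_boundary aC bC P 0 < rate_boundary aB bB P 0"
    using gains P crossing pos by (simp add: rate_boundary_zero add_pos_pos)
  show ?thesis
  proof (unfold_locales)
    show "\<And>r r'. 0 \<le> r \<Longrightarrow> r < r' \<Longrightarrow> r' \<le> log 2 (1 + P * aB) \<Longrightarrow>
        rate_boundary aB bB P r' < rate_boundary aB bB P r"
      using gains P crossing pos by (blast intro: rate_boundary_strict_decreasing)
    show "\<And>r r'. 0 \<le> r \<Longrightarrow> r < r' \<Longrightarrow> r' \<le> log 2 (1 + P * aC) \<Longrightarrow>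
        rate_boundary aC bC P r' < rate_boundary aC bC P r"
      using gains P crossing pos by (blast intro: rate_boundary_strict_decreasing)
    show "continuous_on {0..log 2 (1 + P * aB)} (rate_boundary aB bB P)"
      "continuous_on {0..log 2 (1 + P * aC)} (rate_boundary aC bC P)"
      using gains P crossing pos by (simp_all add: rate_boundary_continuous_on)
    show "(rate_boundary aB bB P has_real_derivative
        - boundary_steepness (2 powr x) (exp_boundary aB bB P (2 powr x)) (bB / aB)) (at x)"
      "(rate_boundary aC bC P has_real_derivative
        - boundary_steepness (2 powr x) (exp_boundary aC bC P (2 powr x)) (bC / aC)) (at x)"
      using gains P crossing pos x_C by (simp_all add: rate_boundary_has_derivative)
    show "rate_boundary aB bB P (log 2 (1 + P * aB)) = 0" "rate_boundary aC bC P (log 2 (1 + P * aC)) = 0"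
      using gains P crossing pos by (simp_all add: rate_boundary_end)
  qed (fact crossing crossing_unique ends(1) start transversal)+
qed

lemma chan_less_chan_iff:
  assumes "0 < \<beta>0" "H \<noteq> 0"
  shows "chan \<beta>0 H xk x < chan \<beta>0 H xk y \<longleftrightarrow> \<bar>y - xk\<bar> < \<bar>x - xk\<bar>"
proof -
  have "\<beta>0 / A < \<beta>0 / B \<longleftrightarrow> B < A" if "0 < A" "0 < B" for A B
    using that assms(1) by (simp add: divide_simps)
  moreover have "0 < (x - xk)\<^sup>2 + H\<^sup>2" "0 < (y - xk)\<^sup>2 + H\<^sup>2" using assms by (simp_all add: add_nonneg_pos)
  ultimately have "chan \<beta>0 H xk x < chan \<beta>0 H xk y \<longleftrightarrow> (y - xk)\<^sup>2 < (x - xk)\<^sup>2"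
    by (simp add: chan_def)
  then show ?thesis by (simp add: abs_le_square_iff flip: not_le)
qed

lemma gains_pos:
  assumes "0 < \<beta>0" "H \<noteq> 0"
  shows "0 < h1 D H \<beta>0 x" "0 < h2 D H \<beta>0 x"
  using assms by (simp_all add: h1_def h2_def chan_def add_nonneg_pos)

lemma gains_ordered:
  assumes "0 < \<beta>0" "H \<noteq> 0" "- D / 2 \<le> xC" "xC < xB" "xB \<le> D / 2"
  shows "h1 D H \<beta>0 xB < h1 D H \<beta>0 xC" "h2 D H \<beta>0 xC < h2 D H \<beta>0 xB"
  using assms by (simp_all add: h1_def h2_def chan_less_chan_iff)

lemma rate_boundary_mem_C_f:
  assumes "0 < H" "0 < \<beta>0" "0 < P" "r \<in> bdom D H \<beta>0 P x"
  shows "(r, rate_boundary (h1 D H \<beta>0 x) (h2 D H \<beta>0 x) P r) \<in> C_f D H \<beta>0 P x"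
proof -
  note gains = gains_pos[OF assms(2), of H D x]
  have r: "0 \<le> r" "r \<le> log 2 (1 + P * h1 D H \<beta>0 x)" using assms(4) by (simp_all add: bdom_def)
  note s = powr_bounds_if_le_log[OF r]
  have "1 \<le> exp_boundary (h1 D H \<beta>0 x) (h2 D H \<beta>0 x) P (2 powr r)"
    using exp_boundary_ge_one[OF gains assms(3) s] assms gains by simp
  then show ?thesis
    using exp_region_exp_boundary[OF gains assms(3) s] rate_boundary_nonneg[OF gains assms(3) r] s
      assms gains r
    by (simp add: mem_C_f_iff_exp_region rate_boundary_def)
qed

lemma bcurve_eq_rate_boundary:
  assumes "0 < H" "0 < \<beta>0" "0 < P" "r \<in> bdom D H \<beta>0 P x"
  shows "bcurve D H \<beta>0 P x r = rate_boundary (h1 D H \<beta>0 x) (h2 D H \<beta>0 x) P r"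
  unfolding bcurve_def
proof (rule Greatest_equality)
  show "(r, rate_boundary (h1 D H \<beta>0 x) (h2 D H \<beta>0 x) P r) \<in> C_f D H \<beta>0 P x"
    using rate_boundary_mem_C_f[OF assms] .
next
  fix y
  assume "(r, y) \<in> C_f D H \<beta>0 P x"
  then have "0 \<le> r" "exp_region (h1 D H \<beta>0 x) (h2 D H \<beta>0 x) P (2 powr r) (2 powr y)"
    using assms by (simp_all add: mem_C_f_iff_exp_region)
  then have "2 powr y \<le> exp_boundary (h1 D H \<beta>0 x) (h2 D H \<beta>0 x) P (2 powr r)"
    using gains_pos[OF assms(2), of H D x] assms
    by (intro exp_region_le_exp_boundary) (auto simp: ge_one_powr_ge_zero)
  moreover from this have "0 < exp_boundary (h1 D H \<beta>0 x) (h2 D H \<beta>0 x) P (2 powr r)"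
    by (rule less_le_trans[rotated]) simp
  ultimately show "y \<le> rate_boundary (h1 D H \<beta>0 x) (h2 D H \<beta>0 x) P r"
    by (simp add: rate_boundary_def le_log_iff)
qed

theorem lemma7:
  fixes D H \<beta>0 P xB xC r1BC r2BC r1B r2B r1C r2C w1 w2 c :: real
  assumes "D > 0" and "H > 0" and "\<beta>0 > 0" and "P > 0"
    and "- D / 2 \<le> xC" and "xC < xB" and "xB \<le> D / 2"
    \<comment> \<open>(r1BC, r2BC) is the unique intersection point of the two boundary curves\<close>
    and "r1BC \<in> bdom D H \<beta>0 P xB" and "r1BC \<in> bdom D H \<beta>0 P xC"
    and "r2BC = bcurve D H \<beta>0 P xB r1BC" and "r2BC = bcurve D H \<beta>0 P xC r1BC"
    and "\<forall>r1 \<in> bdom D H \<beta>0 P xB \<inter> bdom D H \<beta>0 P xC.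
           bcurve D H \<beta>0 P xB r1 = bcurve D H \<beta>0 P xC r1 \<longrightarrow> r1 = r1BC"
    \<comment> \<open>the touching points lie on the respective boundary curves\<close>
    and "r1B \<in> bdom D H \<beta>0 P xB" and "r2B = bcurve D H \<beta>0 P xB r1B"
    and "r1C \<in> bdom D H \<beta>0 P xC" and "r2C = bcurve D H \<beta>0 P xC r1C"
    \<comment> \<open>the line w1 r1 + w2 r2 = c with upper-right normal supports the union
        (equivalently its convex hull) and touches both boundaries at these points\<close>
    and "w1 \<ge> 0" and "w2 \<ge> 0" and "(w1, w2) \<noteq> (0, 0)"
    and "\<forall>(r1, r2) \<in> C_f D H \<beta>0 P xB \<union> C_f D H \<beta>0 P xC. w1 * r1 + w2 * r2 \<le> c"
    and "w1 * r1B + w2 * r2B = c" and "w1 * r1C + w2 * r2C = c"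
  shows "0 \<le> r1B \<and> r1B < r1BC \<and> r1BC < r1C \<and> 0 \<le> r2C \<and> r2C < r2BC \<and> r2BC < r2B"
proof -
  define aB bB aC bC where "aB = h1 D H \<beta>0 xB" and "bB = h2 D H \<beta>0 xB"
    and "aC = h1 D H \<beta>0 xC" and "bC = h2 D H \<beta>0 xC"
  define fB fC where "fB = rate_boundary aB bB P" and "fC = rate_boundary aC bC P"
  have gains: "0 < aB" "aB < aC" "0 < bC" "bC < bB"
    using gains_pos[OF assms(3)] gains_ordered[OF assms(3) _ assms(5-7)] assms(2)
    by (simp_all add: aB_def bB_def aC_def bC_def)
  have domB: "bdom D H \<beta>0 P xB = {0..log 2 (1 + P * aB)}"
    and domC: "bdom D H \<beta>0 P xC = {0..log 2 (1 + P * aC)}"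
    by (simp_all add: bdom_def aB_def aC_def)
  have curveB: "r \<in> bdom D H \<beta>0 P xB \<Longrightarrow> bcurve D H \<beta>0 P xB r = fB r"
    and curveC: "r \<in> bdom D H \<beta>0 P xC \<Longrightarrow> bcurve D H \<beta>0 P xC r = fC r" for r
    using bcurve_eq_rate_boundary assms(2-4) by (simp_all add: fB_def fC_def aB_def bB_def aC_def bC_def)
  have "log 2 (1 + P * aB) < log 2 (1 + P * aC)" using gains assms(4) by (simp add: add_pos_pos)
  then have nested: "bdom D H \<beta>0 P xB \<subseteq> bdom D H \<beta>0 P xC" using domB domC by auto
  have crossing: "0 \<le> r1BC" "r1BC \<le> log 2 (1 + P * aB)" "fB r1BC = fC r1BC"
    using assms(8-11) domB curveB curveC by auto
  have crossing_unique: "r = r1BC" if "0 \<le> r" "r \<le> log 2 (1 + P * aB)" "fB r = fC r" for r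
    using assms(12) that domB nested curveB curveC by auto
  obtain f' g' where "crossing_curves fB fC (log 2 (1 + P * aB)) (log 2 (1 + P * aC)) r1BC f' g'"
    using rate_boundaries_crossing_curves[OF gains assms(4) crossing[unfolded fB_def fC_def]]
      crossing_unique unfolding fB_def fC_def by blast
  moreover have "w1 * r + w2 * fB r \<le> c" if "r \<in> bdom D H \<beta>0 P xB" for r
    using assms(20) rate_boundary_mem_C_f[OF assms(2-4) that] by (auto simp: fB_def aB_def bB_def)
  moreover have "w1 * r + w2 * fC r \<le> c" if "r \<in> bdom D H \<beta>0 P xC" for r
    using assms(20) rate_boundary_mem_C_f[OF assms(2-4) that] by (auto simp: fC_def aC_def bC_def)
  moreover have on_curves: "r2B = fB r1B" "r2C = fC r1C" "r2BC = fC r1BC"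
    using assms(9,11,13-16) curveB curveC by simp_all
  ultimately interpret common_support_line fB fC "log 2 (1 + P * aB)" "log 2 (1 + P * aC)" r1BC f' g'
    w1 w2 c r1B r1C
    using assms(13,15,17-19,21,22) domB domC
    by (intro common_support_line.intro common_support_line_axioms.intro) auto
  show ?thesis
    using touch_points_ordered on_curves by simp
qed

end
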